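(* For $f : X \to \mathbb{R}$, the following are equivalent: Player II has a winning strategy in $\Gamma'(f)$; Player II has winning strategies in both $\Gamma(f)$ and $\Gamma(-f)$; $f$ is of Baire class 1.
   Context: Let $A$ be a non-empty countable set and $T$ a pruned tree on $A$ (a set of finite sequences of elements of $A$, closed under initial segments, in which every sequence has a proper extension in $T$). Let $X$ be the set of infinite branches of $T$, with the topology generated by the cylinder sets $O(s) = \{x \in X : s \text{ is an initial segment of } x\}$, $s \in T$. Baire class 1 means a pointwise limit of continuous functions. The game $\Gamma(g)$ for $g : X \to \mathbb{R}$: Player I and Player II alternate, Player I moving first; Player I plays $x_0, x_1, \dots \in A$ subject to $(x_0,\dots,x_t) \in T$ for all $t$, and after each move $x_t$ Player II plays a real $v_t$; Player II wins iff $g(x_0,x_1,\dots) = \limsup_t v_t$. The game $\Gamma'(f)$ is the same except that Player II's moves are pairs of reals $(v_t, w_t)$, and Player II wins iff $f(x_0,x_1,\dots) = \limsup_t v_t = \liminf_t w_t$; otherwise Player I wins. *)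

theory Defs
  imports "HOL-Analysis.Analysis"
begin

definition pruned_tree :: "'a set \<Rightarrow> 'a list set \<Rightarrow> bool" where
  "pruned_tree A T \<longleftrightarrow> T \<subseteq> lists A
     \<and> (\<forall>s\<in>T. \<forall>n. take n s \<in> T)
     \<and> (\<forall>s\<in>T. \<exists>u\<in>T. length s < length u \<and> take (length s) u = s)"

definition init_seg :: "(nat \<Rightarrow> 'a) \<Rightarrow> nat \<Rightarrow> 'a list" where
  "init_seg x n = map x [0..<n]"

definition branches :: "'a list set \<Rightarrow> (nat \<Rightarrow> 'a) set" where
  "branches T = {x. \<forall>n. init_seg x n \<in> T}"

definition cyl :: "'a list set \<Rightarrow> 'a list \<Rightarrow> (nat \<Rightarrow> 'a) set" where
  "cyl T s = {x \<in> branches T. init_seg x (length s) = s}"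

definition branch_topology :: "'a list set \<Rightarrow> (nat \<Rightarrow> 'a) topology" where
  "branch_topology T = topology_generated_by (cyl T ` T)"

definition baire_class_1 :: "'a list set \<Rightarrow> ((nat \<Rightarrow> 'a) \<Rightarrow> real) \<Rightarrow> bool" where
  "baire_class_1 T f \<longleftrightarrow>
     (\<exists>F :: nat \<Rightarrow> (nat \<Rightarrow> 'a) \<Rightarrow> real.
        (\<forall>n. continuous_map (branch_topology T) euclideanreal (F n))
        \<and> (\<forall>x\<in>branches T. (\<lambda>n. F n x) \<longlonglongrightarrow> f x))"

text \<open>A strategy for II assigns to
  Player I's moves (x_0,...,x_t) the answer v_t (II's own earlier moves are determined
  by the strategy).\<close>
definition II_wins_Gamma :: "'a list set \<Rightarrow> ((nat \<Rightarrow> 'a) \<Rightarrow> real) \<Rightarrow> bool" where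
  "II_wins_Gamma T g \<longleftrightarrow>
     (\<exists>\<sigma> :: 'a list \<Rightarrow> real. \<forall>x\<in>branches T.
        limsup (\<lambda>t. ereal (\<sigma> (init_seg x (Suc t)))) = ereal (g x))"

definition II_wins_Gamma' :: "'a list set \<Rightarrow> ((nat \<Rightarrow> 'a) \<Rightarrow> real) \<Rightarrow> bool" where
  "II_wins_Gamma' T f \<longleftrightarrow>
     (\<exists>\<sigma> :: 'a list \<Rightarrow> real \<times> real. \<forall>x\<in>branches T.
        limsup (\<lambda>t. ereal (fst (\<sigma> (init_seg x (Suc t))))) = ereal (f x)
        \<and> liminf (\<lambda>t. ereal (snd (\<sigma> (init_seg x (Suc t))))) = ereal (f x))"

end

theory Submission
  imports Defs
begin

text \<open>
  A strategy of Player II in \<open>\<Gamma>'(f)\<close> is the same thing as a pair of strategies for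
  \<open>\<Gamma>(f)\<close> and \<open>\<Gamma>(-f)\<close>, since \<open>liminf w\<^sub>t = - limsup (- w\<^sub>t)\<close>.

  If \<open>f\<close> is the pointwise limit of continuous \<open>F\<^sub>n\<close>, Player II can play
  \<open>F\<^sub>N(y)\<close> for a point \<open>y\<close> of the current cylinder, where \<open>N\<close> is the largest index
  such that \<open>F\<^sub>0, \<dots>, F\<^sub>N\<close> all oscillate by at most \<open>1/(N+1)\<close> on that cylinder;
  by continuity \<open>N\<close> tends to infinity along every branch, so these answers converge to
  \<open>f(x)\<close>.

  Conversely, winning strategies for \<open>\<Gamma>(f)\<close> and \<open>\<Gamma>(-f)\<close> produce along each branch
  sequences \<open>u\<close>, \<open>l\<close> with \<open>limsup u = f(x) = liminf l\<close>. From their first \<open>n\<close> terms one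
  computes a number converging to \<open>f(x)\<close>: the maximum of \<open>u\<close> over the longest final
  window \<open>[m, n]\<close> on which \<open>min l\<close> does not exceed \<open>max u + 1/(m+1)\<close>. This number
  depends only on the first \<open>n + 1\<close> moves, hence is a continuous function of the branch.
\<close>

section \<open>Cylinders and the branch topology\<close>

lemma length_init_seg [simp]: "length (init_seg x n) = n"
  by (simp add: init_seg_def)

lemma take_init_seg: "k \<le> n \<Longrightarrow> take k (init_seg x n) = init_seg x k"
  by (simp add: init_seg_def take_map)

lemma init_seg_eq_mono: "init_seg x n = init_seg y n \<Longrightarrow> k \<le> n \<Longrightarrow> init_seg x k = init_seg y k"
  by (metis take_init_seg)

lemma in_cyl_init_seg: "x \<in> branches T \<Longrightarrow> x \<in> cyl T (init_seg x t)"
  by (simp add: cyl_def)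

lemma cyl_init_seg_antimono: "t \<le> t' \<Longrightarrow> cyl T (init_seg x t') \<subseteq> cyl T (init_seg x t)"
  unfolding cyl_def using init_seg_eq_mono by fastforce

lemma topspace_branch_topology [simp]: "topspace (branch_topology T) = branches T"
proof
  show "topspace (branch_topology T) \<subseteq> branches T"
    by (auto simp: branch_topology_def cyl_def)
  show "branches T \<subseteq> topspace (branch_topology T)"
  proof
    fix x assume x: "x \<in> branches T"
    then have "init_seg x 0 \<in> T" by (simp add: branches_def)
    with in_cyl_init_seg[OF x, of 0] show "x \<in> topspace (branch_topology T)"
      by (auto simp: branch_topology_def)
  qed
qed

lemma openin_branch_topology_imp_cyl_subset:
  assumes "openin (branch_topology T) V" "x \<in> V"
  shows "\<exists>t. cyl T (init_seg x t) \<subseteq> V"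
proof -
  have "generate_topology_on (cyl T ` T) V"
    using assms(1) by (simp add: branch_topology_def openin_topology_generated_by_iff)
  then show ?thesis using assms(2)
  proof (induction arbitrary: x)
    case Empty then show ?case by simp
  next
    case (Int a b)
    then obtain t1 t2 where "cyl T (init_seg x t1) \<subseteq> a" "cyl T (init_seg x t2) \<subseteq> b" by blast
    then have "cyl T (init_seg x (max t1 t2)) \<subseteq> a \<inter> b"
      using cyl_init_seg_antimono[of t1 "max t1 t2" T x] cyl_init_seg_antimono[of t2 "max t1 t2" T x]
      by auto
    then show ?case by blast
  next
    case (UN K)
    then obtain k where "k \<in> K" "x \<in> k" by blast
    with UN.IH obtain t where "cyl T (init_seg x t) \<subseteq> k" by blast
    with \<open>k \<in> K\<close> show ?case by blast
  next
    case (Basis s)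
    then obtain s0 where "s = cyl T s0" by blast
    with Basis have "init_seg x (length s0) = s0" by (simp add: cyl_def)
    with \<open>s = cyl T s0\<close> show ?case by (metis order_refl)
  qed
qed

lemma continuous_map_branch_topology_eventually_cyl:
  assumes "continuous_map (branch_topology T) euclideanreal g" "x \<in> branches T" "e > 0"
  shows "eventually (\<lambda>t. \<forall>y\<in>cyl T (init_seg x t). \<bar>g y - g x\<bar> < e) sequentially"
proof -
  let ?V = "{y \<in> branches T. g y \<in> ball (g x) e}"
  have "openin (branch_topology T) ?V"
    using assms(1) unfolding continuous_map_def by (metis open_ball open_openin topspace_branch_topology)
  moreover have "x \<in> ?V" using assms by simp
  ultimately obtain t0 where "cyl T (init_seg x t0) \<subseteq> ?V"
    using openin_branch_topology_imp_cyl_subset by blast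
  then have "\<forall>t\<ge>t0. \<forall>y\<in>cyl T (init_seg x t). \<bar>g y - g x\<bar> < e"
    using cyl_init_seg_antimono by (fastforce simp: dist_real_def abs_minus_commute)
  then show ?thesis unfolding eventually_sequentially by blast
qed

lemma continuous_map_branch_topology_if_init_seg_determined:
  assumes "\<And>x y. x \<in> branches T \<Longrightarrow> y \<in> branches T \<Longrightarrow> init_seg x n = init_seg y n \<Longrightarrow> g x = g y"
  shows "continuous_map (branch_topology T) euclideanreal g"
  unfolding continuous_map_def
proof (intro conjI allI impI)
  show "g \<in> topspace (branch_topology T) \<rightarrow> topspace euclideanreal" by simp
  fix U :: "real set"
  let ?S = "{x \<in> topspace (branch_topology T). g x \<in> U}"
  have S_eq: "?S = (\<Union>x\<in>?S. cyl T (init_seg x n))"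
  proof
    show "?S \<subseteq> (\<Union>x\<in>?S. cyl T (init_seg x n))"
      using in_cyl_init_seg by fastforce
    show "(\<Union>x\<in>?S. cyl T (init_seg x n)) \<subseteq> ?S"
    proof
      fix y assume "y \<in> (\<Union>x\<in>?S. cyl T (init_seg x n))"
      then obtain x where "x \<in> ?S" "y \<in> branches T" "init_seg y n = init_seg x n"
        by (auto simp: cyl_def)
      with assms[of y x] show "y \<in> ?S" by simp
    qed
  qed
  have "generate_topology_on (cyl T ` T) (\<Union>x\<in>?S. cyl T (init_seg x n))"
  proof (rule generate_topology_on.UN)
    fix k assume "k \<in> (\<lambda>x. cyl T (init_seg x n)) ` ?S"
    then obtain x where "x \<in> branches T" "k = cyl T (init_seg x n)" by auto
    then have "k \<in> cyl T ` T" by (simp add: branches_def)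
    then show "generate_topology_on (cyl T ` T) k" by (rule generate_topology_on.Basis)
  qed
  then show "openin (branch_topology T) ?S"
    by (subst S_eq) (simp add: branch_topology_def openin_topology_generated_by_iff)
qed

section \<open>Merging a limsup and a liminf approximation\<close>

lemma frequently_less_Limsup:
  fixes X :: "_ \<Rightarrow> _ :: complete_linorder"
  assumes "y < Limsup F X"
  shows "\<exists>\<^sub>F x in F. y < X x"
proof (rule ccontr)
  assume "\<not> ?thesis"
  then have "eventually (\<lambda>x. X x \<le> y) F" by (simp add: not_frequently not_less)
  then have "Limsup F X \<le> y" by (rule Limsup_bounded)
  with assms show False by simp
qed

lemma frequently_Liminf_less:
  fixes X :: "_ \<Rightarrow> _ :: complete_linorder"
  assumes "Liminf F X < y"
  shows "\<exists>\<^sub>F x in F. X x < y"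
proof (rule ccontr)
  assume "\<not> ?thesis"
  then have "eventually (\<lambda>x. y \<le> X x) F" by (simp add: not_frequently not_less)
  then have "y \<le> Liminf F X" by (rule Liminf_bounded)
  with assms show False by simp
qed

definition window_max :: "(nat \<Rightarrow> real) \<Rightarrow> nat \<Rightarrow> nat \<Rightarrow> real" where
  "window_max u k n = Max (u ` {k..n})"

definition window_min :: "(nat \<Rightarrow> real) \<Rightarrow> nat \<Rightarrow> nat \<Rightarrow> real" where
  "window_min l k n = Min (l ` {k..n})"

definition window_crosses :: "(nat \<Rightarrow> real) \<Rightarrow> (nat \<Rightarrow> real) \<Rightarrow> nat \<Rightarrow> nat \<Rightarrow> bool" where
  "window_crosses u l m n \<longleftrightarrow>
     m \<le> n \<and> window_min l m n \<le> window_max u m n + inverse (real (Suc m))"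

definition crossing_index :: "(nat \<Rightarrow> real) \<Rightarrow> (nat \<Rightarrow> real) \<Rightarrow> nat \<Rightarrow> nat" where
  "crossing_index u l n = (GREATEST m. window_crosses u l m n)"

definition squeeze_seq :: "(nat \<Rightarrow> real) \<Rightarrow> (nat \<Rightarrow> real) \<Rightarrow> nat \<Rightarrow> real" where
  "squeeze_seq u l n = window_max u (crossing_index u l n) n"

lemma crossing_index:
  assumes "window_crosses u l k n"
  shows "k \<le> crossing_index u l n" and "window_crosses u l (crossing_index u l n) n"
  using Greatest_le_nat[of "\<lambda>m. window_crosses u l m n" k n]
    GreatestI_nat[of "\<lambda>m. window_crosses u l m n" k n] assms
  unfolding crossing_index_def window_crosses_def by auto

lemma squeeze_seq_cong:
  assumes "\<And>i. i \<le> n \<Longrightarrow> u i = u' i" "\<And>i. i \<le> n \<Longrightarrow> l i = l' i"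
  shows "squeeze_seq u l n = squeeze_seq u' l' n"
proof -
  have "window_max u m n = window_max u' m n" "window_min l m n = window_min l' m n" for m
    unfolding window_max_def window_min_def using assms by (auto intro!: image_cong)
  then show ?thesis unfolding squeeze_seq_def crossing_index_def window_crosses_def by presburger
qed

lemma eventually_window_crosses:
  assumes u: "limsup (\<lambda>i. ereal (u i)) = ereal c" and l: "liminf (\<lambda>i. ereal (l i)) = ereal c"
  shows "eventually (\<lambda>n. window_crosses u l k n) sequentially"
proof -
  define d where "d = inverse (real (Suc k)) / 2"
  have "d > 0" by (simp add: d_def)
  have "\<exists>\<^sub>F i in sequentially. ereal (c - d) < ereal (u i)"
    by (rule frequently_less_Limsup) (simp add: u \<open>d > 0\<close>)
  moreover have "\<exists>\<^sub>F i in sequentially. ereal (l i) < ereal (c + d)"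
    by (rule frequently_Liminf_less) (simp add: l \<open>d > 0\<close>)
  ultimately obtain i1 i2 where i1: "k \<le> i1" "c - d < u i1" and i2: "k \<le> i2" "l i2 < c + d"
    unfolding frequently_sequentially less_ereal.simps by meson
  have "window_crosses u l k n" if "max i1 i2 \<le> n" for n
  proof -
    have "u i1 \<le> window_max u k n" "window_min l k n \<le> l i2"
      unfolding window_max_def window_min_def using i1 i2 that by auto
    with i1 i2 that show ?thesis
      unfolding window_crosses_def by (simp add: d_def)
  qed
  then show ?thesis unfolding eventually_sequentially by blast
qed

lemma squeeze_seq_tendsto:
  assumes u: "limsup (\<lambda>i. ereal (u i)) = ereal c" and l: "liminf (\<lambda>i. ereal (l i)) = ereal c"
  shows "squeeze_seq u l \<longlonglongrightarrow> c"
proof (rule LIMSEQ_I)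
  fix r :: real assume "r > 0"
  define e where "e = r / 2"
  have e: "e > 0" using \<open>r > 0\<close> by (simp add: e_def)
  have "eventually (\<lambda>i. ereal (u i) < ereal (c + e)) sequentially"
    by (rule Limsup_lessD) (simp add: u e)
  moreover have "eventually (\<lambda>i. ereal (c - e) < ereal (l i)) sequentially"
    by (rule less_LiminfD) (simp add: l e)
  ultimately have "eventually (\<lambda>i. u i < c + e \<and> c - e < l i) sequentially"
    by eventually_elim simp
  then have "eventually (\<lambda>k. \<forall>i\<ge>k. u i < c + e \<and> c - e < l i) sequentially"
    by (rule eventually_all_ge_at_top)
  moreover have "eventually (\<lambda>k. inverse (real (Suc k)) < e) sequentially"
    using order_tendstoD(2)[OF LIMSEQ_inverse_real_of_nat e] by simp
  ultimately obtain k where k: "\<And>i. k \<le> i \<Longrightarrow> u i < c + e \<and> c - e < l i" "inverse (real (Suc k)) < e"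
    using eventually_happens'[OF sequentially_bot eventually_conj] by blast
  obtain n0 where n0: "\<And>n. n0 \<le> n \<Longrightarrow> window_crosses u l k n"
    using eventually_window_crosses[OF u l] unfolding eventually_sequentially by blast
  show "\<exists>n0. \<forall>n\<ge>n0. norm (squeeze_seq u l n - c) < r"
  proof (intro exI allI impI)
    fix n assume "n0 \<le> n"
    define m where "m = crossing_index u l n"
    have "k \<le> m" and crosses: "window_crosses u l m n"
      using crossing_index[OF n0[OF \<open>n0 \<le> n\<close>]] by (simp_all add: m_def)
    then have "squeeze_seq u l n < c + e" "c - e < window_min l m n" "inverse (real (Suc m)) < e"
      using k unfolding squeeze_seq_def window_max_def window_min_def window_crosses_def m_def
      by (auto intro: le_less_trans[rotated])
    with crosses show "norm (squeeze_seq u l n - c) < r"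
      unfolding window_crosses_def squeeze_seq_def m_def by (simp add: e_def abs_less_iff)
  qed
qed

section \<open>Baire class 1 functions admit convergent answers\<close>

definition cyl_point :: "'a list set \<Rightarrow> 'a list \<Rightarrow> nat \<Rightarrow> 'a" where
  "cyl_point T s = (SOME y. y \<in> cyl T s)"

definition cyl_oscillation_small ::
    "'a list set \<Rightarrow> (nat \<Rightarrow> (nat \<Rightarrow> 'a) \<Rightarrow> real) \<Rightarrow> nat \<Rightarrow> 'a list \<Rightarrow> bool" where
  "cyl_oscillation_small T F n s \<longleftrightarrow>
     (\<forall>m\<le>n. \<forall>y\<in>cyl T s. \<forall>z\<in>cyl T s. \<bar>F m y - F m z\<bar> \<le> inverse (real (Suc n)))"

definition oscillation_index :: "'a list set \<Rightarrow> (nat \<Rightarrow> (nat \<Rightarrow> 'a) \<Rightarrow> real) \<Rightarrow> 'a list \<Rightarrow> nat" where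
  "oscillation_index T F s = (GREATEST n. n \<le> length s \<and> cyl_oscillation_small T F n s)"

definition diagonal_approx ::
    "'a list set \<Rightarrow> (nat \<Rightarrow> (nat \<Rightarrow> 'a) \<Rightarrow> real) \<Rightarrow> 'a list \<Rightarrow> real" where
  "diagonal_approx T F s = F (oscillation_index T F s) (cyl_point T s)"

lemma oscillation_index:
  assumes "k \<le> length s" "cyl_oscillation_small T F k s"
  shows "k \<le> oscillation_index T F s" and "cyl_oscillation_small T F (oscillation_index T F s) s"
  using Greatest_le_nat[of "\<lambda>n. n \<le> length s \<and> cyl_oscillation_small T F n s" k "length s"]
    GreatestI_nat[of "\<lambda>n. n \<le> length s \<and> cyl_oscillation_small T F n s" k "length s"] assms
  unfolding oscillation_index_def by auto

lemma eventually_cyl_oscillation_small: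
  assumes cont: "\<And>n. continuous_map (branch_topology T) euclideanreal (F n)"
    and x: "x \<in> branches T"
  shows "eventually (\<lambda>t. cyl_oscillation_small T F k (init_seg x t)) sequentially"
proof -
  define d where "d = inverse (real (Suc k)) / 2"
  have "d > 0" by (simp add: d_def)
  have "eventually (\<lambda>t. \<forall>m\<in>{..k}. \<forall>y\<in>cyl T (init_seg x t). \<bar>F m y - F m x\<bar> < d) sequentially"
    using eventually_ball_finite[OF finite_atMost, of k,
        OF ballI[OF continuous_map_branch_topology_eventually_cyl[OF cont x \<open>d > 0\<close>]]] .
  then show ?thesis
  proof eventually_elim
    case (elim t)
    show ?case unfolding cyl_oscillation_small_def
    proof (intro allI impI ballI)
      fix m y z assume "m \<le> k" "y \<in> cyl T (init_seg x t)" "z \<in> cyl T (init_seg x t)"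
      with elim have "\<bar>F m y - F m x\<bar> < d" "\<bar>F m z - F m x\<bar> < d" by auto
      then show "\<bar>F m y - F m z\<bar> \<le> inverse (real (Suc k))" unfolding d_def by linarith
    qed
  qed
qed

lemma diagonal_approx_tendsto:
  assumes cont: "\<And>n. continuous_map (branch_topology T) euclideanreal (F n)"
    and x: "x \<in> branches T" and lim: "(\<lambda>n. F n x) \<longlonglongrightarrow> c"
  shows "(\<lambda>t. diagonal_approx T F (init_seg x t)) \<longlonglongrightarrow> c"
proof (rule LIMSEQ_I)
  fix r :: real assume "r > 0"
  define e where "e = r / 2"
  have e: "e > 0" using \<open>r > 0\<close> by (simp add: e_def)
  have "eventually (\<lambda>n. dist (F n x) c < e) sequentially"
    using lim e by (rule tendstoD)
  then have "eventually (\<lambda>k. \<forall>n\<ge>k. \<bar>F n x - c\<bar> < e) sequentially"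
    unfolding dist_real_def by (rule eventually_all_ge_at_top)
  moreover have "eventually (\<lambda>k. inverse (real (Suc k)) < e) sequentially"
    using order_tendstoD(2)[OF LIMSEQ_inverse_real_of_nat e] by simp
  ultimately obtain k where k: "\<And>n. k \<le> n \<Longrightarrow> \<bar>F n x - c\<bar> < e" "inverse (real (Suc k)) < e"
    using eventually_happens'[OF sequentially_bot eventually_conj] by blast
  have "eventually (\<lambda>t. k \<le> t \<and> cyl_oscillation_small T F k (init_seg x t)) sequentially"
    using eventually_ge_at_top eventually_cyl_oscillation_small[OF cont x] by (rule eventually_conj)
  then obtain t0 where t0: "\<And>t. t0 \<le> t \<Longrightarrow> k \<le> t \<and> cyl_oscillation_small T F k (init_seg x t)"
    unfolding eventually_sequentially by blast
  show "\<exists>t0. \<forall>t\<ge>t0. norm (diagonal_approx T F (init_seg x t) - c) < r"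
  proof (intro exI allI impI)
    fix t assume "t0 \<le> t"
    define s where "s = init_seg x t"
    define N where "N = oscillation_index T F s"
    have "k \<le> N" and "cyl_oscillation_small T F N s"
      using oscillation_index[of k s] t0[OF \<open>t0 \<le> t\<close>] by (simp_all add: N_def s_def)
    moreover have "x \<in> cyl T s" using x by (simp add: s_def in_cyl_init_seg)
    moreover from this have "cyl_point T s \<in> cyl T s"
      unfolding cyl_point_def by (rule someI[of "\<lambda>y. y \<in> cyl T s"])
    ultimately have "\<bar>F N (cyl_point T s) - F N x\<bar> \<le> inverse (real (Suc N))"
      unfolding cyl_oscillation_small_def by blast
    also have "\<dots> \<le> inverse (real (Suc k))"
      using \<open>k \<le> N\<close> by simp
    finally show "norm (diagonal_approx T F (init_seg x t) - c) < r"
      using k(1)[OF \<open>k \<le> N\<close>] k(2)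
      unfolding diagonal_approx_def N_def s_def e_def real_norm_def by arith
  qed
qed

lemma liminf_ereal_uminus: "liminf (\<lambda>t. ereal (- a t)) = - limsup (\<lambda>t. ereal (a t))"
  using ereal_Liminf_uminus[of sequentially "\<lambda>t. ereal (a t)"] by simp

lemma limsup_ereal_uminus: "limsup (\<lambda>t. ereal (- a t)) = - liminf (\<lambda>t. ereal (a t))"
  using liminf_ereal_uminus[of "\<lambda>t. - a t"] by simp

lemma II_wins_Gamma_if_tendsto:
  assumes "\<And>x. x \<in> branches T \<Longrightarrow> (\<lambda>t. \<phi> (init_seg x t)) \<longlonglongrightarrow> g x"
  shows "II_wins_Gamma T g"
  unfolding II_wins_Gamma_def
  using assms by (intro exI[of _ \<phi>] ballI lim_imp_Limsup) (auto intro: LIMSEQ_Suc)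

lemma II_wins_Gamma'_iff:
  "II_wins_Gamma' T f \<longleftrightarrow> II_wins_Gamma T f \<and> II_wins_Gamma T (\<lambda>x. - f x)"
proof
  assume "II_wins_Gamma' T f"
  then obtain \<sigma> where \<sigma>: "\<And>x. x \<in> branches T \<Longrightarrow>
      limsup (\<lambda>t. ereal (fst (\<sigma> (init_seg x (Suc t))))) = ereal (f x)
      \<and> liminf (\<lambda>t. ereal (snd (\<sigma> (init_seg x (Suc t))))) = ereal (f x)"
    unfolding II_wins_Gamma'_def by blast
  have "II_wins_Gamma T f"
    unfolding II_wins_Gamma_def using \<sigma> by (intro exI[of _ "\<lambda>s. fst (\<sigma> s)"]) blast
  moreover have "II_wins_Gamma T (\<lambda>x. - f x)"
    unfolding II_wins_Gamma_def using \<sigma>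
    by (intro exI[of _ "\<lambda>s. - snd (\<sigma> s)"]) (simp add: limsup_ereal_uminus)
  ultimately show "II_wins_Gamma T f \<and> II_wins_Gamma T (\<lambda>x. - f x)" ..
next
  assume "II_wins_Gamma T f \<and> II_wins_Gamma T (\<lambda>x. - f x)"
  then obtain \<sigma>\<^sub>1 \<sigma>\<^sub>2 where
    "\<And>x. x \<in> branches T \<Longrightarrow> limsup (\<lambda>t. ereal (\<sigma>\<^sub>1 (init_seg x (Suc t)))) = ereal (f x)"
    "\<And>x. x \<in> branches T \<Longrightarrow> limsup (\<lambda>t. ereal (\<sigma>\<^sub>2 (init_seg x (Suc t)))) = ereal (- f x)"
    unfolding II_wins_Gamma_def by blast
  then show "II_wins_Gamma' T f"
    unfolding II_wins_Gamma'_def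
    by (intro exI[of _ "\<lambda>s. (\<sigma>\<^sub>1 s, - \<sigma>\<^sub>2 s)"]) (simp add: liminf_ereal_uminus)
qed

lemma II_wins_Gamma_if_baire_class_1:
  assumes "baire_class_1 T f"
  shows "II_wins_Gamma T f" and "II_wins_Gamma T (\<lambda>x. - f x)"
proof -
  obtain F where F_cont: "\<And>n. continuous_map (branch_topology T) euclideanreal (F n)"
    and F_lim: "\<And>x. x \<in> branches T \<Longrightarrow> (\<lambda>n. F n x) \<longlonglongrightarrow> f x"
    using assms unfolding baire_class_1_def by blast
  have lim: "(\<lambda>t. diagonal_approx T F (init_seg x t)) \<longlonglongrightarrow> f x" if "x \<in> branches T" for x
    using F_cont that F_lim[OF that] by (rule diagonal_approx_tendsto)
  show "II_wins_Gamma T f"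
    using lim by (rule II_wins_Gamma_if_tendsto)
  show "II_wins_Gamma T (\<lambda>x. - f x)"
    by (rule II_wins_Gamma_if_tendsto[where \<phi>="\<lambda>s. - diagonal_approx T F s"])
      (simp add: lim tendsto_minus)
qed

lemma baire_class_1_if_II_wins_Gamma:
  assumes "II_wins_Gamma T f" "II_wins_Gamma T (\<lambda>x. - f x)"
  shows "baire_class_1 T f"
proof -
  obtain \<sigma>\<^sub>1 \<sigma>\<^sub>2 where
    \<sigma>\<^sub>1: "\<And>x. x \<in> branches T \<Longrightarrow> limsup (\<lambda>t. ereal (\<sigma>\<^sub>1 (init_seg x (Suc t)))) = ereal (f x)" and
    \<sigma>\<^sub>2: "\<And>x. x \<in> branches T \<Longrightarrow> limsup (\<lambda>t. ereal (\<sigma>\<^sub>2 (init_seg x (Suc t)))) = ereal (- f x)"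
    using assms unfolding II_wins_Gamma_def by blast
  define F where "F n x =
    squeeze_seq (\<lambda>t. \<sigma>\<^sub>1 (init_seg x (Suc t))) (\<lambda>t. - \<sigma>\<^sub>2 (init_seg x (Suc t))) n" for n x
  have "continuous_map (branch_topology T) euclideanreal (F n)" for n
  proof (rule continuous_map_branch_topology_if_init_seg_determined[of T "Suc n"])
    fix x y :: "nat \<Rightarrow> 'a" assume "init_seg x (Suc n) = init_seg y (Suc n)"
    then have "\<And>t. t \<le> n \<Longrightarrow> init_seg x (Suc t) = init_seg y (Suc t)"
      by (rule init_seg_eq_mono) simp
    then show "F n x = F n y" unfolding F_def by (intro squeeze_seq_cong) auto
  qed
  moreover have "(\<lambda>n. F n x) \<longlonglongrightarrow> f x" if "x \<in> branches T" for x
    unfolding F_def using \<sigma>\<^sub>1[OF that] \<sigma>\<^sub>2[OF that]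
    by (intro squeeze_seq_tendsto) (simp_all add: liminf_ereal_uminus)
  ultimately show ?thesis unfolding baire_class_1_def by blast
qed

theorem mainTheorem16:
  fixes A :: "'a set" and T :: "'a list set" and f :: "(nat \<Rightarrow> 'a) \<Rightarrow> real"
  assumes "A \<noteq> {}" and "countable A" and "pruned_tree A T"
  shows "(II_wins_Gamma' T f \<longleftrightarrow> II_wins_Gamma T f \<and> II_wins_Gamma T (\<lambda>x. - f x))
       \<and> (II_wins_Gamma T f \<and> II_wins_Gamma T (\<lambda>x. - f x) \<longleftrightarrow> baire_class_1 T f)"
  using II_wins_Gamma'_iff II_wins_Gamma_if_baire_class_1 baire_class_1_if_II_wins_Gamma by blast

end
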